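(* Let $A_1,\dots,A_m\in\mathbb R^{n\times n}$ and $z\in\mathbb R^n$. For any integer $l\ge1$ let $h^l:\mathbb R^{n\circ l}\to\mathbb R$, \[ h^l(\mathbf w)=\sum_{a_1,\dots,a_l\in[m]}\Big(\sum_{i,j\in[n]^l}\Big(\prod_{k=1}^l (A_{a_k})_{i_kj_k}\Big)\big(w_{i_1\dots i_l}w_{j_1\dots j_l}-z_{i_1}\cdots z_{i_l}z_{j_1}\cdots z_{j_l}\big)\Big)^2 . \] Then for every $l\ge1$, $z^{\otimes l}$ is a second-order point of $h^l$, i.e. $\nabla h^l(z^{\otimes l})=0$ and $\nabla^2h^l(z^{\otimes l})\succeq0$; no RSC or RSS assumption is needed.
   Context: $\mathbb R^{n\circ l}$ denotes $l$-way tensors of size $n\times\cdots\times n$; $z^{\otimes l}$ is the tensor with entries $z_{i_1}\cdots z_{i_l}$. $z$ is the ground truth of the rank-1 matrix sensing problem $\min_{x\in\mathbb R^n}\sum_a\langle A_a,xx^\top-zz^\top\rangle^2$, and $h^l$ is its lifted version. *)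

theory Defs
  imports "HOL-Analysis.Analysis"
begin

text \<open>Multi-indices of length l with entries in [n] (0-based): the coordinates of R^{n o l}.
  An l-way tensor is a function from index lists to reals; only its values on
  these multi-indices matter.\<close>
definition multi_idx :: "nat \<Rightarrow> nat \<Rightarrow> nat list set" where
  "multi_idx n l = {is. length is = l \<and> set is \<subseteq> {..<n}}"

definition tensor_power :: "(nat \<Rightarrow> real) \<Rightarrow> nat list \<Rightarrow> real" where
  "tensor_power z is = (\<Prod>k<length is. z (is ! k))"

text \<open>Lifted objective h^l; A a i j is the (i,j) entry of A_a (a < m, i,j < n).\<close>
definition lifted_obj ::
  "nat \<Rightarrow> nat \<Rightarrow> (nat \<Rightarrow> nat \<Rightarrow> nat \<Rightarrow> real) \<Rightarrow> (nat \<Rightarrow> real) \<Rightarrow> nat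
     \<Rightarrow> (nat list \<Rightarrow> real) \<Rightarrow> real" where
  "lifted_obj n m A z l w =
     (\<Sum>a\<in>multi_idx m l.
        (\<Sum>i\<in>multi_idx n l. \<Sum>j\<in>multi_idx n l.
           (\<Prod>k<l. A (a ! k) (i ! k) (j ! k)) *
           (w i * w j - tensor_power z i * tensor_power z j))\<^sup>2)"

definition partial_deriv :: "(('i \<Rightarrow> real) \<Rightarrow> real) \<Rightarrow> ('i \<Rightarrow> real) \<Rightarrow> 'i \<Rightarrow> real" where
  "partial_deriv f w p = deriv (\<lambda>t. f (w(p := w p + t))) 0"

definition hessian_entry :: "(('i \<Rightarrow> real) \<Rightarrow> real) \<Rightarrow> ('i \<Rightarrow> real) \<Rightarrow> 'i \<Rightarrow> 'i \<Rightarrow> real" where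
  "hessian_entry f w p q = deriv (\<lambda>s. partial_deriv f (w(q := w q + s)) p) 0"

end

theory Submission
  imports Defs
begin

text \<open>The lifted objective is the sum of squares of the quadratic residuals
  \<open>g\<^sub>a w = (\<Sum>i j. c\<^sub>a i j * (w i * w j - T i * T j))\<close>, which all vanish at
  \<open>T = z\<^sup>\<otimes>\<^sup>l\<close>. Hence the gradient \<open>\<Sum>\<^sub>a 2 g\<^sub>a \<nabla>g\<^sub>a\<close> vanishes at \<open>T\<close>, and of the
  Hessian \<open>\<Sum>\<^sub>a 2 (\<nabla>g\<^sub>a \<nabla>g\<^sub>a\<^sup>T + g\<^sub>a \<nabla>\<^sup>2g\<^sub>a)\<close> only the Gram part survives, which is
  positive semidefinite.\<close>

lemma partial_deriv_sum_squares:
  assumes "\<And>a. a \<in> S \<Longrightarrow> ((\<lambda>t. g a (w(p := w p + t))) has_real_derivative g' a) (at 0)"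
  shows "partial_deriv (\<lambda>w. \<Sum>a\<in>S. (g a w)\<^sup>2) w p = (\<Sum>a\<in>S. 2 * g a w * g' a)"
proof -
  have "((\<lambda>t. \<Sum>a\<in>S. (g a (w(p := w p + t)))\<^sup>2) has_real_derivative
          (\<Sum>a\<in>S. 2 * g a w * g' a)) (at 0)"
  proof (rule DERIV_sum)
    fix a assume "a \<in> S"
    have "((\<lambda>t. g a (w(p := w p + t)) * g a (w(p := w p + t))) has_real_derivative
            g a (w(p := w p + 0)) * g' a + g' a * g a (w(p := w p + 0))) (at 0)"
      using assms[OF \<open>a \<in> S\<close>] assms[OF \<open>a \<in> S\<close>] by (rule DERIV_mult')
    then show "((\<lambda>t. (g a (w(p := w p + t)))\<^sup>2) has_real_derivative 2 * g a w * g' a) (at 0)"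
      by (simp add: power2_eq_square mult_ac)
  qed
  then show ?thesis
    unfolding partial_deriv_def by (rule DERIV_imp_deriv)
qed

lemma hessian_entry_sum_squares_at_common_zero:
  assumes deriv_p:
      "\<And>a w. a \<in> S \<Longrightarrow> ((\<lambda>t. g a (w(p := w p + t))) has_real_derivative Dp a w) (at 0)"
    and deriv_q: "\<And>a. a \<in> S \<Longrightarrow> ((\<lambda>t. g a (T(q := T q + t))) has_real_derivative Dq a) (at 0)"
    and Dp_differentiable: "\<And>a. a \<in> S \<Longrightarrow> (\<lambda>s. Dp a (T(q := T q + s))) differentiable (at 0)"
    and zero: "\<And>a. a \<in> S \<Longrightarrow> g a T = 0"
  shows "hessian_entry (\<lambda>w. \<Sum>a\<in>S. (g a w)\<^sup>2) T p q = 2 * (\<Sum>a\<in>S. Dq a * Dp a T)"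
proof -
  let ?Tq = "\<lambda>s. T(q := T q + s)"
  have gradient:
      "partial_deriv (\<lambda>w. \<Sum>a\<in>S. (g a w)\<^sup>2) w p = (\<Sum>a\<in>S. 2 * g a w * Dp a w)" for w
    using deriv_p by (rule partial_deriv_sum_squares)
  have "((\<lambda>s. \<Sum>a\<in>S. 2 * g a (?Tq s) * Dp a (?Tq s)) has_real_derivative
          (\<Sum>a\<in>S. 2 * (Dq a * Dp a T))) (at 0)"
  proof (rule DERIV_sum)
    fix a assume a: "a \<in> S"
    obtain E where E: "((\<lambda>s. Dp a (?Tq s)) has_real_derivative E) (at 0)"
      using Dp_differentiable[OF a] by (auto simp: real_differentiable_def)
    have "((\<lambda>s. 2 * (g a (?Tq s) * Dp a (?Tq s))) has_real_derivative
            2 * (g a (?Tq 0) * E + Dq a * Dp a (?Tq 0))) (at 0)"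
      by (intro DERIV_cmult DERIV_mult' deriv_q[OF a] E)
    then show "((\<lambda>s. 2 * g a (?Tq s) * Dp a (?Tq s)) has_real_derivative
                 2 * (Dq a * Dp a T)) (at 0)"
      by (simp add: zero[OF a] mult.assoc)
  qed
  then show ?thesis
    unfolding hessian_entry_def gradient sum_distrib_left
    by (rule DERIV_imp_deriv)
qed

lemma quadratic_form_sum_outer_products:
  fixes v :: "'i \<Rightarrow> real"
  shows "(\<Sum>p\<in>I. \<Sum>q\<in>I. v p * v q * (\<Sum>a\<in>S. D a q * D a p))
           = (\<Sum>a\<in>S. (\<Sum>p\<in>I. v p * D a p)\<^sup>2)"
proof -
  have "(\<Sum>p\<in>I. \<Sum>q\<in>I. v p * v q * (\<Sum>a\<in>S. D a q * D a p))
      = (\<Sum>p\<in>I. \<Sum>q\<in>I. \<Sum>a\<in>S. (v p * D a p) * (v q * D a q))"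
    by (simp add: sum_distrib_left mult_ac)
  also have "\<dots> = (\<Sum>a\<in>S. \<Sum>p\<in>I. \<Sum>q\<in>I. (v p * D a p) * (v q * D a q))"
    by (simp add: sum.swap[where A = I and B = S])
  also have "\<dots> = (\<Sum>a\<in>S. (\<Sum>p\<in>I. v p * D a p)\<^sup>2)"
    by (simp add: power2_eq_square sum_product)
  finally show ?thesis .
qed

definition quad_residual ::
    "('i \<Rightarrow> 'i \<Rightarrow> real) \<Rightarrow> 'i set \<Rightarrow> ('i \<Rightarrow> real) \<Rightarrow> ('i \<Rightarrow> real) \<Rightarrow> real" where
  "quad_residual c I T w = (\<Sum>i\<in>I. \<Sum>j\<in>I. c i j * (w i * w j - T i * T j))"

lemma quad_residual_self [simp]: "quad_residual c I T T = 0"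
  by (simp add: quad_residual_def)

lemma fun_upd_add_apply: "(w(p := w p + t)) i = w i + (if i = p then t else (0::'a::monoid_add))"
  by simp

lemma linear_form_line_deriv:
  assumes "finite I" "q \<in> I"
  shows "((\<lambda>s. \<Sum>j\<in>I. b j * (w(q := w q + s)) j) has_real_derivative b q) (at 0)"
proof -
  have "((\<lambda>s. \<Sum>j\<in>I. b j * (w j + (if j = q then s else 0))) has_real_derivative
          (\<Sum>j\<in>I. b j * (if j = q then 1 else 0))) (at 0)"
    by (intro DERIV_sum DERIV_cmult) (auto intro!: derivative_eq_intros)
  then show ?thesis
    using assms unfolding fun_upd_add_apply by (simp add: if_distrib cong: if_cong)
qed

lemma quad_residual_line_deriv:
  assumes "finite I" "p \<in> I"
  shows "((\<lambda>t. quad_residual c I T (w(p := w p + t))) has_real_derivative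
            (\<Sum>j\<in>I. (c p j + c j p) * w j)) (at 0)"
proof -
  let ?e = "\<lambda>i. if i = p then 1 else 0 :: real"
  have "((\<lambda>t. quad_residual c I T (w(p := w p + t))) has_real_derivative
          (\<Sum>i\<in>I. \<Sum>j\<in>I. c i j * (?e i * w j + w i * ?e j))) (at 0)"
    unfolding quad_residual_def fun_upd_add_apply
    by (intro DERIV_sum) (auto intro!: derivative_eq_intros)
  also have "(\<Sum>i\<in>I. \<Sum>j\<in>I. c i j * (?e i * w j + w i * ?e j))
      = (\<Sum>i\<in>I. \<Sum>j\<in>I. (if i = p then c i j * w j else 0)
                         + (if j = p then c i j * w i else 0))"
    by (intro sum.cong refl) (simp add: algebra_simps)
  also have "\<dots> = (\<Sum>i\<in>I. \<Sum>j\<in>I. if i = p then c i j * w j else 0)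
                  + (\<Sum>i\<in>I. \<Sum>j\<in>I. if j = p then c i j * w i else 0)"
    by (simp only: sum.distrib)
  also have "(\<Sum>i\<in>I. \<Sum>j\<in>I. if i = p then c i j * w j else 0)
      = (\<Sum>j\<in>I. \<Sum>i\<in>I. if i = p then c i j * w j else 0)"
    by (rule sum.swap)
  also have "(\<Sum>j\<in>I. \<Sum>i\<in>I. if i = p then c i j * w j else 0)
             + (\<Sum>i\<in>I. \<Sum>j\<in>I. if j = p then c i j * w i else 0)
      = (\<Sum>j\<in>I. (c p j + c j p) * w j)"
    using assms by (simp add: sum.distrib algebra_simps)
  finally show ?thesis .
qed

theorem theorem5p7:
  fixes n m l :: nat and A :: "nat \<Rightarrow> nat \<Rightarrow> nat \<Rightarrow> real" and z :: "nat \<Rightarrow> real"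
  assumes "l \<ge> 1"
  shows "(\<forall>p\<in>multi_idx n l.
            partial_deriv (lifted_obj n m A z l) (tensor_power z) p = 0)
       \<and> (\<forall>v :: nat list \<Rightarrow> real.
            (\<Sum>p\<in>multi_idx n l. \<Sum>q\<in>multi_idx n l.
               v p * v q * hessian_entry (lifted_obj n m A z l) (tensor_power z) p q) \<ge> 0)"
proof -
  let ?T = "tensor_power z" and ?I = "multi_idx n l" and ?S = "multi_idx m l"
  define c where "c a i j = (\<Prod>k<l. A (a ! k) (i ! k) (j ! k))" for a i j :: "nat list"
  define D where "D a p = (\<Sum>j\<in>?I. (c a p j + c a j p) * ?T j)" for a p
  have finite_I: "finite ?I"
    unfolding multi_idx_def using finite_lists_length_eq[of "{..<n}" l]
    by (simp add: conj_commute)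
  have h: "lifted_obj n m A z l = (\<lambda>w. \<Sum>a\<in>?S. (quad_residual (c a) ?I ?T w)\<^sup>2)"
    by (simp add: fun_eq_iff lifted_obj_def quad_residual_def c_def)
  note residual_deriv = quad_residual_line_deriv[OF finite_I]
  have "partial_deriv (lifted_obj n m A z l) ?T p = 0" if "p \<in> ?I" for p
    unfolding h partial_deriv_sum_squares[OF residual_deriv[OF that]] by simp
  moreover have "hessian_entry (lifted_obj n m A z l) ?T p q = 2 * (\<Sum>a\<in>?S. D a q * D a p)"
    if "p \<in> ?I" "q \<in> ?I" for p q
    unfolding h D_def
    by (rule hessian_entry_sum_squares_at_common_zero
          [OF residual_deriv[OF that(1)] residual_deriv[OF that(2)]])
      (auto simp only: real_differentiable_def quad_residual_self
            intro: linear_form_line_deriv[OF finite_I that(2)])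
  ultimately show ?thesis
    by (simp add: sum_distrib_left[symmetric] mult.left_commute sum_nonneg
                  quadratic_form_sum_outer_products cong: sum.cong)
qed

end
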